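(* Let $\mathcal{O}$ be an operad, $A$ a color of $\mathcal{O}$, and $L\subseteq\mathcal{O}(A)$ a regular language of constants. Let $F:\mathcal{P}\to\mathcal{O}$ be a functor of operads and $R$ a color of $\mathcal{P}$ with $F(R)=A$. Then $F^{-1}(L)\cap\mathcal{P}(R)=\{c\in\mathcal{P}(R)\mid F(c)\in L\}$ is a regular language of constants in $\mathcal{P}$.
   Context: Operads are colored, non-symmetric operads; $\mathcal{O}(A)$ denotes the set of constants (nullary operations) of output color $A$. A functor of operads $p:\mathcal{Q}\to\mathcal{O}$ is ULF if for every operation $\alpha$ of $\mathcal{Q}$ and operations $g,h$ of $\mathcal{O}$ and index $i$ with $p(\alpha)=g\circ_i h$ there is a unique pair $\beta,\gamma$ with $\alpha=\beta\circ_i\gamma$, $p(\beta)=g$, $p(\gamma)=h$; it is finitary if its fibers over every color and every operation are finite. A nondeterministic finite-state automaton over $\mathcal{O}$ is a tuple $M=(\mathcal{O},\mathcal{Q},p,q_r)$ with $p:\mathcal{Q}\to\mathcal{O}$ finitary ULF and $q_r$ a color of $\mathcal{Q}$; it recognizes $\{p(\alpha)\mid\alpha\in\mathcal{Q}(q_r)\}\subseteq\mathcal{O}(p(q_r))$. A subset $L\subseteq\mathcal{O}(A)$ is a regular language of constants if it is the language recognized by such an automaton with $p(q_r)=A$. *)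

theory Defs
  imports Main
begin

text \<open>Colored non-symmetric operads, presented by partial compositions.
  An operation f has output color tgt f and list of input colors src f;
  pcomp g i h is the partial composition g \<circ>_i h (0-indexed), meaningful
  when tgt h = src g ! i.\<close>

record ('c, 'o) operad =
  colors :: "'c set"
  opers  :: "'o set"
  tgt    :: "'o \<Rightarrow> 'c"
  src    :: "'o \<Rightarrow> 'c list"
  ident  :: "'c \<Rightarrow> 'o"
  pcomp  :: "'o \<Rightarrow> nat \<Rightarrow> 'o \<Rightarrow> 'o"

definition composable :: "('c, 'o) operad \<Rightarrow> 'o \<Rightarrow> nat \<Rightarrow> 'o \<Rightarrow> bool" where
  "composable Op g i h \<longleftrightarrow> g \<in> opers Op \<and> h \<in> opers Op \<and> i < length (src Op g)
     \<and> tgt Op h = src Op g ! i"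

definition operad :: "('c, 'o) operad \<Rightarrow> bool" where
  "operad Op \<longleftrightarrow>
     (\<forall>f \<in> opers Op. tgt Op f \<in> colors Op \<and> set (src Op f) \<subseteq> colors Op) \<and>
     (\<forall>c \<in> colors Op. ident Op c \<in> opers Op \<and> tgt Op (ident Op c) = c \<and> src Op (ident Op c) = [c]) \<and>
     (\<forall>g i h. composable Op g i h \<longrightarrow>
         pcomp Op g i h \<in> opers Op \<and> tgt Op (pcomp Op g i h) = tgt Op g \<and>
         src Op (pcomp Op g i h) = take i (src Op g) @ src Op h @ drop (Suc i) (src Op g)) \<and>
     (\<forall>f \<in> opers Op. pcomp Op (ident Op (tgt Op f)) 0 f = f) \<and>
     (\<forall>f \<in> opers Op. \<forall>i < length (src Op f). pcomp Op f i (ident Op (src Op f ! i)) = f) \<and>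
     (\<forall>f g h i j. composable Op f i g \<and> composable Op g j h \<longrightarrow>
         pcomp Op (pcomp Op f i g) (i + j) h = pcomp Op f i (pcomp Op g j h)) \<and>
     (\<forall>f g h i j. i < j \<and> composable Op f i g \<and> composable Op f j h \<longrightarrow>
         pcomp Op (pcomp Op f j h) i g = pcomp Op (pcomp Op f i g) (j + length (src Op g) - 1) h)"

definition consts_of :: "('c, 'o) operad \<Rightarrow> 'c \<Rightarrow> 'o set" where
  "consts_of Op A = {f \<in> opers Op. src Op f = [] \<and> tgt Op f = A}"

definition operad_functor ::
  "('c, 'o) operad \<Rightarrow> ('d, 'p) operad \<Rightarrow> ('c \<Rightarrow> 'd) \<Rightarrow> ('o \<Rightarrow> 'p) \<Rightarrow> bool" where
  "operad_functor P Op Fc Fo \<longleftrightarrow>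
     (\<forall>c \<in> colors P. Fc c \<in> colors Op) \<and>
     (\<forall>f \<in> opers P. Fo f \<in> opers Op \<and> tgt Op (Fo f) = Fc (tgt P f)
                     \<and> src Op (Fo f) = map Fc (src P f)) \<and>
     (\<forall>c \<in> colors P. Fo (ident P c) = ident Op (Fc c)) \<and>
     (\<forall>g i h. composable P g i h \<longrightarrow> Fo (pcomp P g i h) = pcomp Op (Fo g) i (Fo h))"

definition ulf :: "('c, 'o) operad \<Rightarrow> ('d, 'p) operad \<Rightarrow> ('c \<Rightarrow> 'd) \<Rightarrow> ('o \<Rightarrow> 'p) \<Rightarrow> bool" where
  "ulf Q Op pc po \<longleftrightarrow>
     (\<forall>\<alpha> \<in> opers Q. \<forall>g h i. composable Op g i h \<and> po \<alpha> = pcomp Op g i h \<longrightarrow>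
        (\<exists>!(\<beta>, \<gamma>). composable Q \<beta> i \<gamma> \<and> \<alpha> = pcomp Q \<beta> i \<gamma> \<and> po \<beta> = g \<and> po \<gamma> = h))"

definition finitary :: "('c, 'o) operad \<Rightarrow> ('d, 'p) operad \<Rightarrow> ('c \<Rightarrow> 'd) \<Rightarrow> ('o \<Rightarrow> 'p) \<Rightarrow> bool" where
  "finitary Q Op pc po \<longleftrightarrow>
     (\<forall>c \<in> colors Op. finite {q \<in> colors Q. pc q = c}) \<and>
     (\<forall>f \<in> opers Op. finite {\<alpha> \<in> opers Q. po \<alpha> = f})"

definition nfa ::
  "('d, 'p) operad \<Rightarrow> ('c, 'o) operad \<Rightarrow> ('c \<Rightarrow> 'd) \<Rightarrow> ('o \<Rightarrow> 'p) \<Rightarrow> 'c \<Rightarrow> bool" where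
  "nfa Op Q pc po qr \<longleftrightarrow> operad Q \<and> operad_functor Q Op pc po \<and> ulf Q Op pc po
     \<and> finitary Q Op pc po \<and> qr \<in> colors Q"

definition recognized ::
  "('d, 'p) operad \<Rightarrow> ('c, 'o) operad \<Rightarrow> ('c \<Rightarrow> 'd) \<Rightarrow> ('o \<Rightarrow> 'p) \<Rightarrow> 'c \<Rightarrow> 'p set" where
  "recognized Op Q pc po qr = po ` consts_of Q qr"

text \<open>L \<subseteq> Op(A) is a regular language of constants, witnessed by an automaton whose
  operad Q has colors of type 'qc and operations of type 'qo.\<close>
definition regular_const ::
  "('qc \<times> 'qo) itself \<Rightarrow> ('d, 'p) operad \<Rightarrow> 'd \<Rightarrow> 'p set \<Rightarrow> bool" where
  "regular_const _ Op A L \<longleftrightarrow>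
     (\<exists>(Q :: ('qc, 'qo) operad) pc po qr.
        nfa Op Q pc po qr \<and> pc qr = A \<and> recognized Op Q pc po qr = L)"

end

theory Submission
  imports Defs
begin

text \<open>Finitary ULF functors are stable under pullback. Pulling the automaton
  p : Q \<rightarrow> Op back along F : P \<rightarrow> Op gives the fibre product of Q and P over Op, whose
  projection to P is again finitary and ULF: a factorisation of (\<alpha>, g \<circ>_i h) over
  (g, h) is the same as a factorisation of \<alpha> over (F g, F h), which exists uniquely
  because p is ULF. A constant c of P of color R lifts to a constant of color (q_r, R)
  exactly when F c = p \<alpha> for some constant \<alpha> of color q_r, i.e. when F c \<in> L.\<close>

lemma operad_tgt_in_colors: "operad Op \<Longrightarrow> f \<in> opers Op \<Longrightarrow> tgt Op f \<in> colors Op"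
  unfolding operad_def by meson

lemma operad_src_in_colors: "operad Op \<Longrightarrow> f \<in> opers Op \<Longrightarrow> set (src Op f) \<subseteq> colors Op"
  unfolding operad_def by meson

lemma operad_ident:
  "operad Op \<Longrightarrow> c \<in> colors Op \<Longrightarrow>
     ident Op c \<in> opers Op \<and> tgt Op (ident Op c) = c \<and> src Op (ident Op c) = [c]"
  unfolding operad_def by meson

lemma operad_pcomp:
  "operad Op \<Longrightarrow> composable Op g i h \<Longrightarrow>
     pcomp Op g i h \<in> opers Op \<and> tgt Op (pcomp Op g i h) = tgt Op g \<and>
     src Op (pcomp Op g i h) = take i (src Op g) @ src Op h @ drop (Suc i) (src Op g)"
  unfolding operad_def by meson

lemma operad_left_unit: "operad Op \<Longrightarrow> f \<in> opers Op \<Longrightarrow> pcomp Op (ident Op (tgt Op f)) 0 f = f"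
  unfolding operad_def by meson

lemma operad_right_unit:
  "operad Op \<Longrightarrow> f \<in> opers Op \<Longrightarrow> i < length (src Op f) \<Longrightarrow> pcomp Op f i (ident Op (src Op f ! i)) = f"
  unfolding operad_def by meson

lemma operad_assoc:
  "operad Op \<Longrightarrow> composable Op f i g \<Longrightarrow> composable Op g j h \<Longrightarrow>
     pcomp Op (pcomp Op f i g) (i + j) h = pcomp Op f i (pcomp Op g j h)"
  unfolding operad_def by meson

lemma operad_interchange:
  "operad Op \<Longrightarrow> i < j \<Longrightarrow> composable Op f i g \<Longrightarrow> composable Op f j h \<Longrightarrow>
     pcomp Op (pcomp Op f j h) i g = pcomp Op (pcomp Op f i g) (j + length (src Op g) - 1) h"
  unfolding operad_def by meson

lemma operad_functor_colors: "operad_functor P Op Fc Fo \<Longrightarrow> c \<in> colors P \<Longrightarrow> Fc c \<in> colors Op"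
  unfolding operad_functor_def by meson

lemma operad_functor_opers:
  "operad_functor P Op Fc Fo \<Longrightarrow> f \<in> opers P \<Longrightarrow>
     Fo f \<in> opers Op \<and> tgt Op (Fo f) = Fc (tgt P f) \<and> src Op (Fo f) = map Fc (src P f)"
  unfolding operad_functor_def by meson

lemma operad_functor_ident:
  "operad_functor P Op Fc Fo \<Longrightarrow> c \<in> colors P \<Longrightarrow> Fo (ident P c) = ident Op (Fc c)"
  unfolding operad_functor_def by meson

lemma operad_functor_pcomp:
  "operad_functor P Op Fc Fo \<Longrightarrow> composable P g i h \<Longrightarrow> Fo (pcomp P g i h) = pcomp Op (Fo g) i (Fo h)"
  unfolding operad_functor_def by meson

lemma operad_functor_composable:
  "operad_functor P Op Fc Fo \<Longrightarrow> composable P g i h \<Longrightarrow> composable Op (Fo g) i (Fo h)"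
  unfolding operad_functor_def composable_def by auto

lemma Ex1_prod_fixed_snd:
  assumes "\<exists>!(b, c). R b c"
  shows "\<exists>!(\<beta>, \<gamma>). snd \<beta> = g \<and> snd \<gamma> = h \<and> R (fst \<beta>) (fst \<gamma>)"
  using assms unfolding Ex1_def by (auto simp: split_paired_all)

text \<open>On operations, zip loses nothing: functoriality forces src Q a and src P f to
  have the same length whenever p a = F f.\<close>

definition pullback_operad ::
  "('qc, 'qo) operad \<Rightarrow> ('qc \<Rightarrow> 'c) \<Rightarrow> ('qo \<Rightarrow> 'o) \<Rightarrow> ('pc, 'po) operad \<Rightarrow> ('pc \<Rightarrow> 'c) \<Rightarrow> ('po \<Rightarrow> 'o)
     \<Rightarrow> ('qc \<times> 'pc, 'qo \<times> 'po) operad" where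
  "pullback_operad Q pc po P Fc Fo =
     \<lparr>colors = {(q, c). q \<in> colors Q \<and> c \<in> colors P \<and> pc q = Fc c},
      opers = {(a, f). a \<in> opers Q \<and> f \<in> opers P \<and> po a = Fo f},
      tgt = \<lambda>(a, f). (tgt Q a, tgt P f),
      src = \<lambda>(a, f). zip (src Q a) (src P f),
      ident = \<lambda>(q, c). (ident Q q, ident P c),
      pcomp = \<lambda>(b, g) i (c, h). (pcomp Q b i c, pcomp P g i h)\<rparr>"

lemma pullback_operad_simps [simp]:
  "(q, c) \<in> colors (pullback_operad Q pc po P Fc Fo) \<longleftrightarrow> q \<in> colors Q \<and> c \<in> colors P \<and> pc q = Fc c"
  "(a, f) \<in> opers (pullback_operad Q pc po P Fc Fo) \<longleftrightarrow> a \<in> opers Q \<and> f \<in> opers P \<and> po a = Fo f"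
  "tgt (pullback_operad Q pc po P Fc Fo) (a, f) = (tgt Q a, tgt P f)"
  "src (pullback_operad Q pc po P Fc Fo) (a, f) = zip (src Q a) (src P f)"
  "ident (pullback_operad Q pc po P Fc Fo) (q, c) = (ident Q q, ident P c)"
  "pcomp (pullback_operad Q pc po P Fc Fo) (a, f) i (b, g) = (pcomp Q a i b, pcomp P f i g)"
  by (simp_all add: pullback_operad_def)

locale operad_cospan =
  fixes Op :: "('c, 'o) operad"
    and Q :: "('qc, 'qo) operad" and pc :: "'qc \<Rightarrow> 'c" and po :: "'qo \<Rightarrow> 'o"
    and P :: "('pc, 'po) operad" and Fc :: "'pc \<Rightarrow> 'c" and Fo :: "'po \<Rightarrow> 'o"
  assumes operad_Q: "operad Q" and operad_P: "operad P"
    and functor_Q: "operad_functor Q Op pc po" and functor_P: "operad_functor P Op Fc Fo"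
begin

abbreviation PB :: "('qc \<times> 'pc, 'qo \<times> 'po) operad" where
  "PB \<equiv> pullback_operad Q pc po P Fc Fo"

lemma src_colors_agree:
  assumes "(a, f) \<in> opers PB"
  shows "map pc (src Q a) = map Fc (src P f)"
  using assms operad_functor_opers[OF functor_Q, of a] operad_functor_opers[OF functor_P, of f]
  by auto

lemma length_src_agree:
  assumes "(a, f) \<in> opers PB"
  shows "length (src Q a) = length (src P f)"
  using src_colors_agree[OF assms] by (metis length_map)

lemma composable_pullback_iff:
  "composable PB (b, g) i (c, h) \<longleftrightarrow>
     composable Q b i c \<and> composable P g i h \<and> po b = Fo g \<and> po c = Fo h"
  using length_src_agree[of b g] unfolding composable_def by auto

lemma pullback_tgt_src_in_colors:
  assumes x: "x \<in> opers PB"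
  shows "tgt PB x \<in> colors PB \<and> set (src PB x) \<subseteq> colors PB"
proof -
  obtain a f where x_eq: "x = (a, f)" and a: "a \<in> opers Q" and f: "f \<in> opers P" and "po a = Fo f"
    using x by (cases x) auto
  have "pc (tgt Q a) = Fc (tgt P f)"
    using \<open>po a = Fo f\<close> operad_functor_opers[OF functor_Q a] operad_functor_opers[OF functor_P f]
    by simp
  moreover have "(q, c) \<in> colors PB" if "(q, c) \<in> set (zip (src Q a) (src P f))" for q c
    using that src_colors_agree[of a f] x x_eq operad_src_in_colors[OF operad_Q a]
      operad_src_in_colors[OF operad_P f]
    by (auto simp: in_set_zip) (metis nth_map)
  ultimately show ?thesis
    using x_eq operad_tgt_in_colors[OF operad_Q a] operad_tgt_in_colors[OF operad_P f] by auto
qed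

lemma pullback_ident:
  assumes "x \<in> colors PB"
  shows "ident PB x \<in> opers PB \<and> tgt PB (ident PB x) = x \<and> src PB (ident PB x) = [x]"
  using assms operad_ident[OF operad_Q] operad_ident[OF operad_P]
    operad_functor_ident[OF functor_Q] operad_functor_ident[OF functor_P]
  by (cases x) auto

lemma pullback_pcomp:
  assumes "composable PB x i y"
  shows "pcomp PB x i y \<in> opers PB \<and> tgt PB (pcomp PB x i y) = tgt PB x \<and>
    src PB (pcomp PB x i y) = take i (src PB x) @ src PB y @ drop (Suc i) (src PB x)"
proof -
  obtain b g c h where x_eq: "x = (b, g)" and y_eq: "y = (c, h)" by force
  have cQ: "composable Q b i c" and cP: "composable P g i h" and "po b = Fo g" "po c = Fo h"
    using assms composable_pullback_iff x_eq y_eq by auto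
  then have "length (src Q b) = length (src P g)" "length (src Q c) = length (src P h)"
    using length_src_agree cQ cP unfolding composable_def by auto
  then show ?thesis
    using \<open>po b = Fo g\<close> \<open>po c = Fo h\<close> x_eq y_eq operad_pcomp[OF operad_Q cQ] operad_pcomp[OF operad_P cP]
      operad_functor_pcomp[OF functor_Q cQ] operad_functor_pcomp[OF functor_P cP]
    by (simp add: take_zip drop_zip)
qed

lemma pullback_interchange:
  assumes "i < j" "composable PB x i y" "composable PB x j z"
  shows "pcomp PB (pcomp PB x j z) i y = pcomp PB (pcomp PB x i y) (j + length (src PB y) - 1) z"
proof -
  obtain a f b g c h where "x = (a, f)" "y = (b, g)" "z = (c, h)" by (metis prod.exhaust)
  with assms length_src_agree[of b g] operad_interchange[OF operad_Q] operad_interchange[OF operad_P]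
  show ?thesis by (auto simp: composable_pullback_iff composable_def)
qed

lemma operad_pullback: "operad PB"
proof -
  have left_unit: "pcomp PB (ident PB (tgt PB x)) 0 x = x" if "x \<in> opers PB" for x
    using that operad_left_unit[OF operad_Q] operad_left_unit[OF operad_P] by (cases x) auto
  have right_unit: "pcomp PB x i (ident PB (src PB x ! i)) = x"
    if "x \<in> opers PB" "i < length (src PB x)" for x i
    using that length_src_agree operad_right_unit[OF operad_Q] operad_right_unit[OF operad_P]
    by (cases x) auto
  have assoc: "pcomp PB (pcomp PB x i y) (i + j) z = pcomp PB x i (pcomp PB y j z)"
    if "composable PB x i y" "composable PB y j z" for x y z i j
    using that operad_assoc[OF operad_Q] operad_assoc[OF operad_P]
    by (cases x; cases y; cases z) (auto simp: composable_pullback_iff)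
  show ?thesis
    unfolding operad_def
    using pullback_tgt_src_in_colors pullback_ident pullback_pcomp left_unit right_unit assoc
      pullback_interchange
    by meson
qed

lemma operad_functor_pullback_snd: "operad_functor PB P snd snd"
  unfolding operad_functor_def composable_def
  using length_src_agree by (auto simp: split_paired_all)

lemma ulf_pullback_snd:
  assumes ulf: "ulf Q Op pc po"
  shows "ulf PB P snd snd"
  unfolding ulf_def
proof (intro ballI allI impI)
  fix x g h i
  assume x: "x \<in> opers PB" and factor: "composable P g i h \<and> snd x = pcomp P g i h"
  obtain a where x_eq: "x = (a, pcomp P g i h)" and a: "a \<in> opers Q"
    and a_over: "po a = pcomp Op (Fo g) i (Fo h)"
    using x factor operad_functor_pcomp[OF functor_P] by (cases x) auto
  have "\<exists>!(b, c). composable Q b i c \<and> a = pcomp Q b i c \<and> po b = Fo g \<and> po c = Fo h"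
    using ulf a a_over factor operad_functor_composable[OF functor_P] unfolding ulf_def by blast
  then have "\<exists>!(\<beta>, \<gamma>). snd \<beta> = g \<and> snd \<gamma> = h \<and>
      composable Q (fst \<beta>) i (fst \<gamma>) \<and> a = pcomp Q (fst \<beta>) i (fst \<gamma>) \<and>
      po (fst \<beta>) = Fo g \<and> po (fst \<gamma>) = Fo h"
    by (rule Ex1_prod_fixed_snd)
  moreover have "composable PB \<beta> i \<gamma> \<and> x = pcomp PB \<beta> i \<gamma> \<and> snd \<beta> = g \<and> snd \<gamma> = h \<longleftrightarrow>
      snd \<beta> = g \<and> snd \<gamma> = h \<and>
      composable Q (fst \<beta>) i (fst \<gamma>) \<and> a = pcomp Q (fst \<beta>) i (fst \<gamma>) \<and>
      po (fst \<beta>) = Fo g \<and> po (fst \<gamma>) = Fo h" for \<beta> \<gamma>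
    using factor x_eq by (cases \<beta>; cases \<gamma>) (auto simp: composable_pullback_iff)
  ultimately show "\<exists>!(\<beta>, \<gamma>). composable PB \<beta> i \<gamma> \<and> x = pcomp PB \<beta> i \<gamma> \<and> snd \<beta> = g \<and> snd \<gamma> = h"
    by simp
qed

lemma finitary_pullback_snd:
  assumes fin: "finitary Q Op pc po"
  shows "finitary PB P snd snd"
  unfolding finitary_def
proof (intro conjI ballI)
  fix c assume "c \<in> colors P"
  then have "finite ({q \<in> colors Q. pc q = Fc c} \<times> {c})"
    using fin operad_functor_colors[OF functor_P] unfolding finitary_def by blast
  then show "finite {x \<in> colors PB. snd x = c}"
    by (rule finite_subset[rotated]) auto
next
  fix f assume "f \<in> opers P"
  then have "finite ({a \<in> opers Q. po a = Fo f} \<times> {f})"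
    using fin operad_functor_opers[OF functor_P] unfolding finitary_def by blast
  then show "finite {x \<in> opers PB. snd x = f}"
    by (rule finite_subset[rotated]) auto
qed

lemma consts_of_pullback_snd:
  "snd ` consts_of PB (qr, R) = {f \<in> consts_of P R. Fo f \<in> po ` consts_of Q qr}"
proof -
  have "(a, f) \<in> consts_of PB (qr, R) \<longleftrightarrow> a \<in> consts_of Q qr \<and> f \<in> consts_of P R \<and> po a = Fo f"
    for a f
    using length_src_agree[of a f] by (auto simp: consts_of_def)
  then show ?thesis by force
qed

end

theorem mainTheorem9:
  fixes Op :: "('c, 'o) operad" and P :: "('pc, 'po) operad"
    and Fc :: "'pc \<Rightarrow> 'c" and Fo :: "'po \<Rightarrow> 'o"
  assumes "operad Op" and "operad P"
    and "A \<in> colors Op"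
    and "regular_const TYPE('qc \<times> 'qo) Op A L"
    and "operad_functor P Op Fc Fo"
    and "R \<in> colors P" and "Fc R = A"
  shows "regular_const TYPE(('qc \<times> 'pc) \<times> ('qo \<times> 'po)) P R {c \<in> consts_of P R. Fo c \<in> L}"
proof -
  obtain Q :: "('qc, 'qo) operad" and pc po qr
    where aut: "nfa Op Q pc po qr" and "pc qr = A" and L: "recognized Op Q pc po qr = L"
    using assms(4) unfolding regular_const_def by blast
  interpret operad_cospan Op Q pc po P Fc Fo
    using aut assms(2,5) unfolding nfa_def by unfold_locales auto
  have "nfa P PB snd snd (qr, R)"
    using aut assms(6,7) \<open>pc qr = A\<close> operad_pullback operad_functor_pullback_snd
      ulf_pullback_snd finitary_pullback_snd
    unfolding nfa_def by auto
  moreover have "recognized P PB snd snd (qr, R) = {c \<in> consts_of P R. Fo c \<in> L}"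
    using L by (simp add: recognized_def consts_of_pullback_snd)
  ultimately show ?thesis
    unfolding regular_const_def by fastforce
qed

end
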